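(* Let $\{U'_{k,n}\}_{k\in\mathbb Z,n\in\mathbb N}$ and $\{V'_{\{k,k+1\},n}\}_{k\in\mathbb Z,n\in\mathbb N}$ be independent Bernoulli random variables with parameter $\epsilon>0$, and let $Z=Z(U',V')$. If $\epsilon$ is small enough, then for every finite initial set $Z_0$ the process $Z$ dies out almost surely, and there are constants $\beta_0,\beta_1>0$ such that for every finite nonempty $Z_0$, $$\mathbb E(N_{\mathrm{ext}}\mid Z_0)\le\beta_0\log|Z_0|+\beta_1,$$ where $N_{\mathrm{ext}}=\inf\{n\ge0:Z_n=\emptyset\}$.
   Context: Given $\{0,1\}$-valued variables $U_{k,n}$ and $V_{\{k,k+1\},n}$ ($k\in\mathbb Z$, $n\in\mathbb N$), define the graph $H$ on $\mathbb Z\times\mathbb N$: if $U_{k,n}=1$ add edges from $(k,n)$ to $(k-1,n+1),(k,n+1),(k+1,n+1)$; if $V_{\{k,k+1\},n}=1$ add these edges for both $(k,n)$ and $(k+1,n)$ and also the edge $(k,n)$–$(k+1,n)$. An $H$-valid path is a sequence of $H$-adjacent vertices $(k_0,n_0),\dots,(k_f,n_f)$ with $n_0\le\dots\le n_f$ and $n_i<n_f$ for all $i<f$. Given a finite set $Z_0\subseteq\mathbb Z$, for $n\ge1$ let $Z_n$ be the set of $k$ such that some $H$-valid path goes from $Z_0\times\{0\}$ to $(k,n)$; this defines $Z=Z(U,V)$. $Z$ dies out if $Z_n=\emptyset$ for some $n$. *)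

theory Defs
  imports "HOL-Probability.Probability"
begin

text \<open>Configurations: U k n models U_{k,n}; V k n models V_{{k,k+1},n}.
  Vertices of H are pairs (k, n) in int x nat.\<close>

definition H_dir :: "(int \<Rightarrow> nat \<Rightarrow> bool) \<Rightarrow> (int \<Rightarrow> nat \<Rightarrow> bool) \<Rightarrow> int \<times> nat \<Rightarrow> int \<times> nat \<Rightarrow> bool" where
  "H_dir U V a b \<longleftrightarrow>
     (let (k, n) = a; (k', n') = b in
       (n' = n + 1 \<and> \<bar>k' - k\<bar> \<le> 1 \<and> (U k n \<or> V k n \<or> V (k - 1) n))
     \<or> (n' = n \<and> k' = k + 1 \<and> V k n))"

definition H_adj :: "(int \<Rightarrow> nat \<Rightarrow> bool) \<Rightarrow> (int \<Rightarrow> nat \<Rightarrow> bool) \<Rightarrow> int \<times> nat \<Rightarrow> int \<times> nat \<Rightarrow> bool" where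
  "H_adj U V a b \<longleftrightarrow> H_dir U V a b \<or> H_dir U V b a"

definition H_valid_path :: "(int \<Rightarrow> nat \<Rightarrow> bool) \<Rightarrow> (int \<Rightarrow> nat \<Rightarrow> bool) \<Rightarrow> (int \<times> nat) list \<Rightarrow> bool" where
  "H_valid_path U V ps \<longleftrightarrow> ps \<noteq> [] \<and>
     (\<forall>i < length ps - 1. H_adj U V (ps ! i) (ps ! Suc i) \<and> snd (ps ! i) \<le> snd (ps ! Suc i)) \<and>
     (\<forall>i < length ps - 1. snd (ps ! i) < snd (last ps))"

definition Zproc :: "(int \<Rightarrow> nat \<Rightarrow> bool) \<Rightarrow> (int \<Rightarrow> nat \<Rightarrow> bool) \<Rightarrow> int set \<Rightarrow> nat \<Rightarrow> int set" where
  "Zproc U V Z0 n = (if n = 0 then Z0 else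
     {k. \<exists>ps. H_valid_path U V ps \<and> hd ps \<in> Z0 \<times> {0} \<and> last ps = (k, n)})"

definition dies_out :: "(int \<Rightarrow> nat \<Rightarrow> bool) \<Rightarrow> (int \<Rightarrow> nat \<Rightarrow> bool) \<Rightarrow> int set \<Rightarrow> bool" where
  "dies_out U V Z0 \<longleftrightarrow> (\<exists>n. Zproc U V Z0 n = {})"

definition N_ext :: "(int \<Rightarrow> nat \<Rightarrow> bool) \<Rightarrow> (int \<Rightarrow> nat \<Rightarrow> bool) \<Rightarrow> int set \<Rightarrow> ennreal" where
  "N_ext U V Z0 = (if dies_out U V Z0 then ennreal (real (LEAST n. Zproc U V Z0 n = {})) else \<infinity>)"

text \<open>Probability space: independent Bernoulli(eps) variables indexed by
  (False,k,n) for U'_{k,n} and (True,k,n) for V'_{{k,k+1},n}.\<close>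
definition bern_space :: "real \<Rightarrow> (bool \<times> int \<times> nat \<Rightarrow> bool) measure" where
  "bern_space \<epsilon> = (\<Pi>\<^sub>M i\<in>(UNIV :: (bool \<times> int \<times> nat) set). measure_pmf (bernoulli_pmf \<epsilon>))"

definition Uof :: "(bool \<times> int \<times> nat \<Rightarrow> bool) \<Rightarrow> int \<Rightarrow> nat \<Rightarrow> bool" where
  "Uof \<omega> k n = \<omega> (False, k, n)"

definition Vof :: "(bool \<times> int \<times> nat \<Rightarrow> bool) \<Rightarrow> int \<Rightarrow> nat \<Rightarrow> bool" where
  "Vof \<omega> k n = \<omega> (True, k, n)"

end

theory Submission
  imports Defs
begin

text \<open>If \<open>Z\<^sub>n\<close> is nonempty, following an H-valid path from \<open>Z\<^sub>0 \<times> {0}\<close> to level \<open>n\<close> gives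
  \<open>n\<close> successive rises, each a (possibly empty) horizontal run of open V-edges followed by an
  upward edge. A Peierls count bounds the probability that such a chain starts at a given site,
  jointly with any set \<open>S\<close> of open variables on lower levels, by \<open>\<epsilon>\<^bsup>|S|\<^esup> \<rho>\<^sup>n\<close> with
  \<open>\<rho> = 9\<epsilon> + 6\<epsilon>/(1 - \<epsilon>)\<close>: all variables used lie on distinct coordinates, so the
  probabilities multiply. For \<open>\<epsilon> \<le> 1/40\<close> we get \<open>\<rho> \<le> 1/2\<close>, hence
  \<open>P(Z\<^sub>n \<noteq> {}) \<le> min 1 (|Z\<^sub>0| 2\<^sup>-\<^sup>n)\<close>; this gives extinction almost surely, and summing over
  \<open>n\<close> bounds \<open>E N\<^sub>e\<^sub>x\<^sub>t\<close> by \<open>log\<^sub>2 |Z\<^sub>0| + 3\<close>.\<close>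

lemma prob_space_bern_space: "prob_space (bern_space e)"
  unfolding bern_space_def by (rule prob_space_PiM) (simp add: prob_space_measure_pmf)

lemma pred_bern_space_component: "Measurable.pred (bern_space e) (\<lambda>\<omega>. \<omega> c)"
proof -
  have "(\<lambda>\<omega>. \<omega> c) \<in> measurable (bern_space e) (measure_pmf (bernoulli_pmf e))"
    unfolding bern_space_def by (rule measurable_component_singleton) simp
  then show ?thesis by (simp add: pred_def measurable_cong_sets)
qed

lemma measure_bern_space_all_true:
  assumes "finite S" "0 \<le> e" "e \<le> 1"
  shows "measure (bern_space e) {\<omega>\<in>space (bern_space e). \<forall>c\<in>S. \<omega> c} = e ^ card S"
proof -
  have eq: "{\<omega>\<in>space (bern_space e). \<forall>c\<in>S. \<omega> c} =
     prod_emb UNIV (\<lambda>_. measure_pmf (bernoulli_pmf e)) S (Pi\<^sub>E S (\<lambda>_. {True}))"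
    unfolding bern_space_def prod_emb_def
    by (auto simp: space_PiM PiE_def extensional_def Pi_def restrict_def fun_eq_iff; metis)
  have "emeasure (bern_space e) {\<omega>\<in>space (bern_space e). \<forall>c\<in>S. \<omega> c} =
      (\<Prod>i\<in>S. emeasure (measure_pmf (bernoulli_pmf e)) {True})"
    unfolding eq unfolding bern_space_def
    by (rule emeasure_PiM_emb) (auto simp: assms prob_space_measure_pmf)
  also have "\<dots> = ennreal (e ^ card S)"
    using assms by (simp add: emeasure_pmf_single prod_ennreal ennreal_power)
  finally show ?thesis using assms by (simp add: measure_def)
qed

definition emits :: "(bool \<times> int \<times> nat \<Rightarrow> bool) \<Rightarrow> int \<Rightarrow> nat \<Rightarrow> bool" where
  "emits \<omega> k t \<longleftrightarrow> \<omega> (False, k, t) \<or> \<omega> (True, k, t) \<or> \<omega> (True, k - 1, t)"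

definition run_coords :: "int \<Rightarrow> int \<Rightarrow> nat \<Rightarrow> (bool \<times> int \<times> nat) set" where
  "run_coords k a t = (\<lambda>i. (True, i, t)) ` {min k a..<max k a}"

text \<open>An H-valid path may wander back and
  forth along a level; a climb only records the net run, which makes climbs countable.\<close>

fun climbs :: "(bool \<times> int \<times> nat \<Rightarrow> bool) \<Rightarrow> nat \<Rightarrow> int \<Rightarrow> nat \<Rightarrow> bool" where
  "climbs \<omega> 0 k t = True"
| "climbs \<omega> (Suc n) k t \<longleftrightarrow> (\<exists>a. (\<forall>c\<in>run_coords k a t. \<omega> c) \<and> emits \<omega> a t \<and>
     (\<exists>d\<in>{-1, 0, 1}. climbs \<omega> n (a + d) (Suc t)))"

lemma card_run_coords: "card (run_coords k a t) = nat \<bar>a - k\<bar>"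
proof -
  have "inj_on (\<lambda>i. (True, i, t)) {min k a..<max k a}" by (auto simp: inj_on_def)
  then show ?thesis unfolding run_coords_def by (simp add: card_image)
qed

lemma pred_climbs: "Measurable.pred (bern_space e) (\<lambda>\<omega>. climbs \<omega> n k t)"
proof (induction n arbitrary: k t)
  case (Suc n)
  show ?case unfolding climbs.simps emits_def
    by (intro pred_intros_countable pred_intros_countable_bounded pred_intros_finite
          pred_intros_logic pred_bern_space_component Suc) auto
qed simp

lemma H_valid_path_ConsD:
  assumes "H_valid_path U V (x # y # ps)"
  shows "H_valid_path U V (y # ps)" "H_adj U V x y" "snd x \<le> snd y" "snd x < snd (last (y # ps))"
proof -
  have step: "\<forall>i < Suc (length ps). H_adj U V ((x # y # ps) ! i) ((x # y # ps) ! Suc i) \<and>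
      snd ((x # y # ps) ! i) \<le> snd ((x # y # ps) ! Suc i)"
   and below: "\<forall>i < Suc (length ps). snd ((x # y # ps) ! i) < snd (last (y # ps))"
    using assms unfolding H_valid_path_def by auto
  from step[rule_format, of 0] show "H_adj U V x y" "snd x \<le> snd y" by auto
  from below[rule_format, of 0] show "snd x < snd (last (y # ps))" by auto
  show "H_valid_path U V (y # ps)" unfolding H_valid_path_def
  proof (intro conjI allI impI)
    fix i assume "i < length (y # ps) - 1"
    then have "Suc i < Suc (length ps)" by simp
    from step[rule_format, OF this] below[rule_format, OF this]
    show "H_adj U V ((y # ps) ! i) ((y # ps) ! Suc i)"
         "snd ((y # ps) ! i) \<le> snd ((y # ps) ! Suc i)"
         "snd ((y # ps) ! i) < snd (last (y # ps))" by auto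
  qed simp
qed

lemma open_run_extend:
  assumes "\<forall>c\<in>run_coords k a t. \<omega> c" "H_adj (Uof \<omega>) (Vof \<omega>) (a, t) (b, t)"
  shows "\<forall>c\<in>run_coords k b t. \<omega> c"
proof -
  have "\<bar>a - b\<bar> = 1" "\<omega> (True, min a b, t)"
    using assms(2) unfolding H_adj_def H_dir_def Uof_def Vof_def by auto
  then have "run_coords k b t \<subseteq> insert (True, min a b, t) (run_coords k a t)"
    unfolding run_coords_def by (auto simp: image_iff)
  then show ?thesis using assms(1) \<open>\<omega> (True, min a b, t)\<close> by blast
qed

lemma H_adj_upward:
  assumes "H_adj (Uof \<omega>) (Vof \<omega>) (a, t) (b, t')" "t \<le> t'" "t' \<noteq> t"
  shows "t' = Suc t" "emits \<omega> a t" "b - a \<in> {-1, 0, 1}"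
  using assms unfolding H_adj_def H_dir_def Uof_def Vof_def emits_def by auto

lemma climbs_if_H_valid_path:
  assumes "H_valid_path (Uof \<omega>) (Vof \<omega>) ps" "hd ps = (a, t)" "\<forall>c\<in>run_coords k a t. \<omega> c"
    "snd (last ps) = t + n"
  shows "climbs \<omega> n k t"
  using assms
proof (induction ps arbitrary: a t n k)
  case Nil
  then show ?case by (simp add: H_valid_path_def)
next
  case (Cons x ps)
  show ?case
  proof (cases ps)
    case Nil
    then show ?thesis using Cons.prems by simp
  next
    case (Cons y ps')
    obtain b t' where y: "y = (b, t')" by (cases y)
    have x: "x = (a, t)" using Cons.prems(2) by simp
    note path = H_valid_path_ConsD[OF Cons.prems(1)[unfolded \<open>ps = y # ps'\<close>]]
    show ?thesis
    proof (cases "t' = t")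
      case True
      then have "\<forall>c\<in>run_coords k b t. \<omega> c"
        using open_run_extend Cons.prems(3) path(2) x y by blast
      then show ?thesis
        using Cons.IH path(1) Cons.prems(4) y True \<open>ps = y # ps'\<close> by simp
    next
      case False
      note up = H_adj_upward[OF path(2)[unfolded x y] path(3)[unfolded x y, simplified] False]
      obtain n' where n': "n = Suc n'" using path(4) Cons.prems(4) x \<open>ps = y # ps'\<close> by (cases n) auto
      have "climbs \<omega> n' b (Suc t)"
        using Cons.IH[where a=b and t="Suc t" and n=n' and k=b] path(1) Cons.prems(4) y up(1) n'
          \<open>ps = y # ps'\<close> by (simp add: run_coords_def)
      then have "climbs \<omega> n' (a + (b - a)) (Suc t)" by simp
      then show ?thesis unfolding n' climbs.simps using Cons.prems(3) up(2,3) by blast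
    qed
  qed
qed

lemma climbs_if_Zproc_nonempty:
  assumes "Zproc (Uof \<omega>) (Vof \<omega>) Z0 n \<noteq> {}"
  shows "\<exists>k\<in>Z0. climbs \<omega> n k 0"
proof (cases "n = 0")
  case False
  then obtain k ps where ps: "H_valid_path (Uof \<omega>) (Vof \<omega>) ps" "hd ps \<in> Z0 \<times> {0}" "last ps = (k, n)"
    using assms by (auto simp: Zproc_def)
  then obtain k0 where "hd ps = (k0, 0)" "k0 \<in> Z0" by auto
  then show ?thesis using climbs_if_H_valid_path[OF ps(1)] ps(3) by (force simp: run_coords_def)
qed (use assms in \<open>auto simp: Zproc_def\<close>)

lemma (in finite_measure) measure_UNION_le_card:
  assumes "finite I" "\<And>i. i \<in> I \<Longrightarrow> A i \<in> sets M" "\<And>i. i \<in> I \<Longrightarrow> measure M (A i) \<le> b"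
  shows "measure M (\<Union>i\<in>I. A i) \<le> real (card I) * b"
  using measure_UNION_le[of I A M] sum_bounded_above[of I "\<lambda>i. measure M (A i)" b] assms by simp

lemma (in finite_measure) measure_UN_le_suminf:
  assumes "\<And>i. A i \<in> sets M" "\<And>i. measure M (A i) \<le> b i" "summable b"
  shows "measure M (\<Union>i. A i) \<le> suminf b"
proof -
  have "summable (\<lambda>i. measure M (A i))"
    using assms by (intro summable_comparison_test'[OF assms(3)]) auto
  then show ?thesis
    using assms finite_measure_subadditive_countably[of A] suminf_le[of "\<lambda>i. measure M (A i)" b]
    by fastforce
qed

definition climb_event ::
    "real \<Rightarrow> (bool \<times> int \<times> nat) set \<Rightarrow> nat \<Rightarrow> int \<Rightarrow> nat \<Rightarrow> (bool \<times> int \<times> nat \<Rightarrow> bool) set"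
  where
  "climb_event e S n k t = {\<omega>\<in>space (bern_space e). (\<forall>c\<in>S. \<omega> c) \<and> climbs \<omega> n k t}"

lemma climb_event_sets: "climb_event e S n k t \<in> sets (bern_space e)"
  unfolding climb_event_def pred_def[symmetric]
  by (intro pred_intros_logic pred_intros_countable_bounded pred_bern_space_component pred_climbs)

lemma climb_event_Suc_subset:
  "climb_event e S (Suc n) k t \<subseteq>
     (\<Union>d\<in>{-1, 0, 1}. \<Union>c\<in>{(False, k, t), (True, k, t), (True, k - 1, t)}.
        climb_event e (insert c S) n (k + d) (Suc t)) \<union>
     (\<Union>r. \<Union>a\<in>{k + int r + 1, k - int r - 1}. \<Union>d\<in>{-1, 0, 1}.
        climb_event e (S \<union> run_coords k a t) n (a + d) (Suc t))"
  (is "_ \<subseteq> ?A \<union> ?B")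
proof
  fix \<omega> assume "\<omega> \<in> climb_event e S (Suc n) k t"
  then obtain a d where \<omega>: "\<omega> \<in> space (bern_space e)" "\<forall>c\<in>S. \<omega> c"
    and run: "\<forall>c\<in>run_coords k a t. \<omega> c" and "emits \<omega> a t"
    and d: "d \<in> {-1, 0, 1}" "climbs \<omega> n (a + d) (Suc t)"
    unfolding climb_event_def mem_Collect_eq climbs.simps by blast
  show "\<omega> \<in> ?A \<union> ?B"
  proof (cases "a = k")
    case True
    then obtain c where "c \<in> {(False, k, t), (True, k, t), (True, k - 1, t)}" "\<omega> c"
      using \<open>emits \<omega> a t\<close> unfolding emits_def by auto
    moreover have "\<omega> \<in> climb_event e (insert c S) n (k + d) (Suc t)"
      using \<omega> d \<open>\<omega> c\<close> True unfolding climb_event_def by simp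
    ultimately have "\<omega> \<in> ?A" using d(1) by (intro UN_I)
    then show ?thesis ..
  next
    case False
    define r where "r = nat (\<bar>a - k\<bar> - 1)"
    have "a \<in> {k + int r + 1, k - int r - 1}" using False unfolding r_def by auto
    moreover have "\<omega> \<in> climb_event e (S \<union> run_coords k a t) n (a + d) (Suc t)"
      using \<omega> run d unfolding climb_event_def by auto
    ultimately have "\<omega> \<in> ?B" using d(1) by (intro UN_I) auto
    then show ?thesis ..
  qed
qed

text \<open>A rise either starts straight up at \<open>k\<close> (3 target sites, 3 variables that may open the
  upward edges) or first crosses \<open>r + 1\<close> V-edges to one of 2 sides (3 target sites, weight
  \<open>\<epsilon>\<^bsup>r+1\<^esup>\<close>); this is where the rate \<open>9\<epsilon> + 6\<epsilon>/(1 - \<epsilon>)\<close> comes from. The new variables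
  lie on level \<open>t\<close>, hence outside \<open>S\<close>.\<close>

lemma measure_climb_event_Suc_le:
  assumes e: "0 < e" "e < 1" and S: "finite S" "\<forall>c\<in>S. snd (snd c) < t" and "0 \<le> B"
    and IH: "\<And>S' j. finite S' \<Longrightarrow> \<forall>c\<in>S'. snd (snd c) < Suc t \<Longrightarrow>
      measure (bern_space e) (climb_event e S' n j (Suc t)) \<le> e ^ card S' * B"
  shows "measure (bern_space e) (climb_event e S (Suc n) k t) \<le>
    e ^ card S * B * (9 * e + 6 * e / (1 - e))"
proof -
  let ?M = "bern_space e"
  interpret prob_space ?M by (rule prob_space_bern_space)
  define D :: "int set" where "D = {-1, 0, 1}"
  define W where "W = {(False, k, t), (True, k, t), (True, k - 1, t)}"
  define A where "A = (\<Union>d\<in>D. \<Union>c\<in>W. climb_event e (insert c S) n (k + d) (Suc t))"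
  define R where "R r = (\<Union>a\<in>{k + int r + 1, k - int r - 1}. \<Union>d\<in>D.
    climb_event e (S \<union> run_coords k a t) n (a + d) (Suc t))" for r
  have D: "finite D" "card D = 3" and W: "finite W" "card W = 3" unfolding D_def W_def by auto
  have "measure ?M (climb_event e (insert c S) n j (Suc t)) \<le> e ^ card S * B * e"
    if "c \<in> W" for c j
  proof -
    have "c \<notin> S" "snd (snd c) = t" using that S(2) unfolding W_def by auto
    then show ?thesis using IH[of "insert c S" j] S by (force simp: algebra_simps)
  qed
  then have "measure ?M (\<Union>c\<in>W. climb_event e (insert c S) n j (Suc t))
      \<le> card W * (e ^ card S * B * e)" for j by (intro measure_UNION_le_card W(1) climb_event_sets)
  then have "measure ?M A \<le> card D * (card W * (e ^ card S * B * e))"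
    unfolding A_def using W(1)
    by (intro measure_UNION_le_card[OF D(1)]) (auto intro: sets.finite_UN climb_event_sets)
  then have A_le: "measure ?M A \<le> 3 * (3 * (e ^ card S * B * e))" using D(2) W(2) by simp
  have R_le: "measure ?M (R r) \<le> 6 * (e ^ card S * B) * e ^ Suc r" for r
  proof -
    have "measure ?M (climb_event e (S \<union> run_coords k a t) n j (Suc t))
        \<le> e ^ card S * B * e ^ Suc r" if "a \<in> {k + int r + 1, k - int r - 1}" for a j
    proof -
      have "card (run_coords k a t) = Suc r" using that by (auto simp: card_run_coords)
      moreover have "S \<inter> run_coords k a t = {}" using S(2) by (auto simp: run_coords_def)
      ultimately have "card (S \<union> run_coords k a t) = card S + Suc r"
        using S(1) by (simp add: card_Un_disjoint run_coords_def)
      then show ?thesis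
        using IH[of "S \<union> run_coords k a t" j] S by (force simp: run_coords_def power_add algebra_simps)
    qed
    then have "measure ?M (\<Union>d\<in>D. climb_event e (S \<union> run_coords k a t) n (a + d) (Suc t))
        \<le> card D * (e ^ card S * B * e ^ Suc r)" if "a \<in> {k + int r + 1, k - int r - 1}" for a
      using that by (intro measure_UNION_le_card D(1) climb_event_sets)
    then have "measure ?M (R r)
        \<le> card {k + int r + 1, k - int r - 1} * (card D * (e ^ card S * B * e ^ Suc r))"
      unfolding R_def using D(1)
      by (intro measure_UNION_le_card[of "{k + int r + 1, k - int r - 1}"])
         (auto intro: sets.finite_UN climb_event_sets)
    moreover have "card {k + int r + 1, k - int r - 1} = 2" by simp
    ultimately show ?thesis using D(2) by (simp add: algebra_simps)
  qed
  have geom: "summable (\<lambda>r. 6 * (e ^ card S * B) * e ^ Suc r)"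
    "(\<Sum>r. 6 * (e ^ card S * B) * e ^ Suc r) = 6 * (e ^ card S * B) * (e / (1 - e))"
    using e by (auto simp: suminf_mult suminf_geometric intro!: summable_mult summable_geometric)
  have "climb_event e S (Suc n) k t \<subseteq> A \<union> (\<Union>r. R r)"
    using climb_event_Suc_subset unfolding A_def R_def D_def W_def .
  then have "measure ?M (climb_event e S (Suc n) k t) \<le> measure ?M (A \<union> (\<Union>r. R r))"
    unfolding A_def R_def using climb_event_sets D(1) W(1)
    by (intro finite_measure_mono) (auto intro!: sets.finite_UN sets.countable_UN)
  also have "\<dots> \<le> measure ?M A + measure ?M (\<Union>r. R r)"
    unfolding A_def R_def using climb_event_sets D(1) W(1)
    by (intro measure_Un_le) (auto intro!: sets.finite_UN sets.countable_UN)
  also have "\<dots> \<le> 3 * (3 * (e ^ card S * B * e)) + 6 * (e ^ card S * B) * (e / (1 - e))"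
    using A_le measure_UN_le_suminf[OF _ R_le geom(1)] geom(2) climb_event_sets D(1)
    unfolding R_def by (auto intro!: add_mono sets.finite_UN)
  also have "\<dots> = e ^ card S * B * (9 * e + 6 * e / (1 - e))" by (simp add: algebra_simps)
  finally show ?thesis .
qed

lemma measure_climb_event_le:
  assumes "0 < e" "e < 1" "finite S" "\<forall>c\<in>S. snd (snd c) < t"
  shows "measure (bern_space e) (climb_event e S n k t) \<le> e ^ card S * (9 * e + 6 * e / (1 - e)) ^ n"
  using assms(3,4)
proof (induction n arbitrary: S k t)
  case 0
  then show ?case
    using measure_bern_space_all_true[of S e] assms(1,2) by (simp add: climb_event_def)
next
  case (Suc n)
  have "0 \<le> (9 * e + 6 * e / (1 - e)) ^ n" using assms(1,2) by simp
  from measure_climb_event_Suc_le[OF assms(1,2) Suc.prems this Suc.IH]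
  show ?case by (simp add: mult_ac)
qed

lemma measure_UN_climb_event_le:
  assumes "0 < e" "e < 1" "finite Z0"
  shows "measure (bern_space e) (\<Union>k\<in>Z0. climb_event e {} n k 0) \<le>
    card Z0 * (9 * e + 6 * e / (1 - e)) ^ n"
proof -
  interpret prob_space "bern_space e" by (rule prob_space_bern_space)
  have "measure (bern_space e) (climb_event e {} n k 0) \<le> (9 * e + 6 * e / (1 - e)) ^ n" for k
    using measure_climb_event_le[OF assms(1,2), where S="{}" and t=0] by simp
  then show ?thesis by (intro measure_UNION_le_card assms(3) climb_event_sets)
qed

lemma Zproc_nonempty_imp_climb_event:
  "\<omega> \<in> space (bern_space e) \<Longrightarrow> Zproc (Uof \<omega>) (Vof \<omega>) Z0 n \<noteq> {} \<Longrightarrow>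
    \<omega> \<in> (\<Union>k\<in>Z0. climb_event e {} n k 0)"
  using climbs_if_Zproc_nonempty by (auto simp: climb_event_def)

lemma climb_rate_le_half:
  assumes "0 < (e::real)" "e \<le> 1/40"
  shows "9 * e + 6 * e / (1 - e) \<le> 1/2"
proof -
  have "6 * e / (1 - e) \<le> 6 * e * (40/39)" using assms by (simp add: field_simps)
  then show ?thesis using assms by linarith
qed

lemma AE_dies_out:
  assumes "0 < e" "e < 1" "9 * e + 6 * e / (1 - e) < 1" "finite Z0"
  shows "AE \<omega> in bern_space e. dies_out (Uof \<omega>) (Vof \<omega>) Z0"
proof -
  let ?M = "bern_space e" and ?\<rho> = "9 * e + 6 * e / (1 - e)"
  interpret prob_space ?M by (rule prob_space_bern_space)
  define N where "N = (\<Inter>n. \<Union>k\<in>Z0. climb_event e {} n k 0)"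
  have N_sets: "N \<in> events"
    unfolding N_def using assms(4) by (auto intro!: sets.finite_UN climb_event_sets)
  have "measure ?M N \<le> card Z0 * ?\<rho> ^ n" for n
    using finite_measure_mono[of N "\<Union>k\<in>Z0. climb_event e {} n k 0"] assms(4)
      measure_UN_climb_event_le[OF assms(1,2,4), of n]
    unfolding N_def by (force intro!: sets.finite_UN climb_event_sets)
  moreover have "(\<lambda>n. card Z0 * ?\<rho> ^ n) \<longlonglongrightarrow> 0"
    using assms(1-3) by (intro tendsto_mult_right_zero LIMSEQ_realpow_zero) auto
  ultimately have "measure ?M N \<le> 0" by (intro LIMSEQ_le_const[of _ 0]) auto
  then have "emeasure ?M N = 0" using N_sets measure_nonneg[of ?M N] by (simp add: emeasure_eq_measure)
  moreover have "{\<omega>\<in>space ?M. \<not> dies_out (Uof \<omega>) (Vof \<omega>) Z0} \<subseteq> N"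
    unfolding N_def dies_out_def using Zproc_nonempty_imp_climb_event by blast
  ultimately show ?thesis using N_sets by (intro AE_I) auto
qed

lemma N_ext_le_suminf_indicator:
  assumes "\<And>n. Zproc U V Z0 n \<noteq> {} \<Longrightarrow> x \<in> C n"
  shows "N_ext U V Z0 \<le> (\<Sum>n. indicator (C n) x)"
proof (cases "dies_out U V Z0")
  case True
  define L where "L = (LEAST n. Zproc U V Z0 n = {})"
  have "x \<in> C n" if "n < L" for n
    using not_less_Least[of n "\<lambda>n. Zproc U V Z0 n = {}"] assms that unfolding L_def by blast
  then have "(\<Sum>n<L. indicator (C n) x :: ennreal) = of_nat L" by simp
  moreover have "(\<Sum>n<L. indicator (C n) x :: ennreal) \<le> (\<Sum>n. indicator (C n) x)"
    by (intro sum_le_suminf) auto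
  ultimately show ?thesis
    using True unfolding N_ext_def L_def[symmetric] by (simp add: ennreal_of_nat_eq_real_of_nat)
next
  case False
  then have "x \<in> C n" for n using assms unfolding dies_out_def by blast
  then have "(\<Sum>n. indicator (C n) x) = (\<Sum>n. ennreal 1)" by simp
  also have "\<dots> = top" by (rule summable_iff_suminf_neq_top) (auto simp: summable_const_iff)
  finally show ?thesis by simp
qed

lemma summable_min_one_half_power:
  "0 \<le> c \<Longrightarrow> summable (\<lambda>n. min 1 (c * (1/2 :: real) ^ n))"
  by (rule summable_comparison_test'[of "\<lambda>n. c * (1/2) ^ n" 0])
     (auto intro!: summable_mult summable_geometric)

lemma suminf_min_one_half_power_le:
  assumes "1 \<le> (c::real)"
  shows "(\<Sum>n. min 1 (c * (1/2) ^ n)) \<le> 1 / ln 2 * ln c + 3"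
proof -
  define f where "f n = min 1 (c * (1/2::real) ^ n)" for n
  define L where "L = nat \<lceil>log 2 c\<rceil>"
  have log_c: "0 \<le> log 2 c" using assms by simp
  have "c = 2 powr (log 2 c)" using assms by simp
  also have "\<dots> \<le> 2 powr (real L)" unfolding L_def by (intro powr_mono real_nat_ceiling_ge) auto
  finally have c_le: "c \<le> 2 ^ L" by (simp add: powr_realpow)
  have "f (n + L) \<le> (1/2) ^ n" for n
  proof -
    have "f (n + L) \<le> (c / 2 ^ L) * (1/2) ^ n" unfolding f_def by (simp add: power_add field_simps)
    also have "\<dots> \<le> (1/2) ^ n" using assms c_le by (intro mult_left_le_one_le) auto
    finally show ?thesis .
  qed
  then have "(\<Sum>n. f (n + L)) \<le> (\<Sum>n. (1/2::real) ^ n)"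
    using summable_min_one_half_power assms
    by (intro suminf_le) (auto intro!: summable_ignore_initial_segment simp: f_def)
  also have "\<dots> = 2" using suminf_geometric[of "1/2::real"] by simp
  finally have tail: "(\<Sum>n. f (n + L)) \<le> 2" .
  have head: "sum f {..<L} \<le> real L" using sum_bounded_above[of "{..<L}" f 1] by (simp add: f_def)
  have "suminf f = (\<Sum>n. f (n + L)) + sum f {..<L}"
    using summable_min_one_half_power assms unfolding f_def by (intro suminf_split_initial_segment) simp
  moreover have "real L \<le> log 2 c + 1" unfolding L_def using log_c by linarith
  ultimately show ?thesis using tail head unfolding f_def by (simp add: log_def)
qed

lemma nn_integral_N_ext_le:
  assumes "0 < e" "e < 1" "9 * e + 6 * e / (1 - e) \<le> 1/2" "finite Z0" "Z0 \<noteq> {}"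
  shows "(\<integral>\<^sup>+ \<omega>. N_ext (Uof \<omega>) (Vof \<omega>) Z0 \<partial>bern_space e) \<le> ennreal (1 / ln 2 * ln (card Z0) + 3)"
proof -
  let ?M = "bern_space e"
  interpret prob_space ?M by (rule prob_space_bern_space)
  define C where "C n = (\<Union>k\<in>Z0. climb_event e {} n k 0)" for n
  define f where "f n = min 1 (card Z0 * (1/2::real) ^ n)" for n
  have C_sets: "C n \<in> events" for n
    unfolding C_def using assms(4) by (auto intro!: sets.finite_UN climb_event_sets)
  have C_le: "measure ?M (C n) \<le> f n" for n
  proof -
    have "measure ?M (C n) \<le> card Z0 * (9 * e + 6 * e / (1 - e)) ^ n"
      unfolding C_def by (rule measure_UN_climb_event_le[OF assms(1,2,4)])
    also have "\<dots> \<le> card Z0 * (1/2) ^ n"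
      using assms(1-3) by (intro mult_left_mono power_mono) auto
    finally show ?thesis unfolding f_def by simp
  qed
  have "(\<integral>\<^sup>+ \<omega>. N_ext (Uof \<omega>) (Vof \<omega>) Z0 \<partial>?M) \<le> (\<integral>\<^sup>+ \<omega>. (\<Sum>n. indicator (C n) \<omega>) \<partial>?M)"
    using Zproc_nonempty_imp_climb_event unfolding C_def
    by (intro nn_integral_mono N_ext_le_suminf_indicator) blast
  also have "\<dots> = (\<Sum>n. ennreal (measure ?M (C n)))"
    using C_sets by (simp add: nn_integral_suminf emeasure_eq_measure)
  also have "\<dots> \<le> (\<Sum>n. ennreal (f n))" using C_le by (intro suminf_le ennreal_leI) auto
  also have "\<dots> = ennreal (\<Sum>n. f n)"
    using summable_min_one_half_power unfolding f_def by (intro suminf_ennreal2) auto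
  also have "\<dots> \<le> ennreal (1 / ln 2 * ln (card Z0) + 3)"
    using suminf_min_one_half_power_le[of "card Z0"] assms(4,5)
    unfolding f_def by (intro ennreal_leI) (simp add: Suc_le_eq card_gt_0_iff)
  finally show ?thesis .
qed

theorem lemma2:
  shows "\<exists>\<epsilon>0 > 0. \<forall>\<epsilon>. 0 < \<epsilon> \<and> \<epsilon> \<le> \<epsilon>0 \<longrightarrow>
     (\<forall>Z0 :: int set. finite Z0 \<longrightarrow>
        (AE \<omega> in bern_space \<epsilon>. dies_out (Uof \<omega>) (Vof \<omega>) Z0)) \<and>
     (\<exists>\<beta>0 > 0. \<exists>\<beta>1 > 0. \<forall>Z0 :: int set. finite Z0 \<and> Z0 \<noteq> {} \<longrightarrow>
        (\<integral>\<^sup>+ \<omega>. N_ext (Uof \<omega>) (Vof \<omega>) Z0 \<partial>bern_space \<epsilon>)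
          \<le> ennreal (\<beta>0 * ln (real (card Z0)) + \<beta>1))"
proof (rule exI[of _ "1/40 :: real"], intro conjI allI impI)
  fix e :: real assume "0 < e \<and> e \<le> 1/40"
  then have e: "0 < e" "e < 1" and rate: "9 * e + 6 * e / (1 - e) \<le> 1/2"
    using climb_rate_le_half by auto
  show "AE \<omega> in bern_space e. dies_out (Uof \<omega>) (Vof \<omega>) Z0" if "finite Z0" for Z0
    using AE_dies_out[OF e _ that] rate by simp
  have "\<forall>Z0 :: int set. finite Z0 \<and> Z0 \<noteq> {} \<longrightarrow>
      (\<integral>\<^sup>+ \<omega>. N_ext (Uof \<omega>) (Vof \<omega>) Z0 \<partial>bern_space e) \<le> ennreal (1 / ln 2 * ln (real (card Z0)) + 3)"
    using nn_integral_N_ext_le[OF e rate] by simp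
  moreover have "0 < 1 / ln (2::real)" "0 < (3::real)" by simp_all
  ultimately show "\<exists>\<beta>0 > 0. \<exists>\<beta>1 > 0. \<forall>Z0 :: int set. finite Z0 \<and> Z0 \<noteq> {} \<longrightarrow>
      (\<integral>\<^sup>+ \<omega>. N_ext (Uof \<omega>) (Vof \<omega>) Z0 \<partial>bern_space e) \<le> ennreal (\<beta>0 * ln (real (card Z0)) + \<beta>1)"
    by blast
qed simp

end
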